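(* Let $m=2^l$ with $l>0$. If $\mathbf{u}\in K(\mathbb{Z}_m^3)$, then $D^2(\mathbf{u})=H(\mathbf{u})$.
   Context: The Ducci function $D:\mathbb{Z}_m^3\to\mathbb{Z}_m^3$ is $D(x_1,x_2,x_3)=(x_1+x_2,\,x_2+x_3,\,x_3+x_1)$, entries mod $m$. $H:\mathbb{Z}_m^3\to\mathbb{Z}_m^3$ is the shift $H(x_1,x_2,x_3)=(x_2,x_3,x_1)$. $K(\mathbb{Z}_m^3)$ is the set of $\mathbf{u}$ lying in the Ducci cycle of some tuple, i.e. with $D^k(\mathbf{u})=\mathbf{u}$ for some $k\ge1$. *)

theory Defs
  imports Main
begin

type_synonym triple = "int \<times> int \<times> int"

definition Zm3 :: "int \<Rightarrow> triple set" where
  "Zm3 m = {(a, b, c). 0 \<le> a \<and> a < m \<and> 0 \<le> b \<and> b < m \<and> 0 \<le> c \<and> c < m}"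

definition ducci :: "int \<Rightarrow> triple \<Rightarrow> triple" where
  "ducci m u = (case u of (x1, x2, x3) \<Rightarrow>
      ((x1 + x2) mod m, (x2 + x3) mod m, (x3 + x1) mod m))"

definition shiftH :: "triple \<Rightarrow> triple" where
  "shiftH u = (case u of (x1, x2, x3) \<Rightarrow> (x2, x3, x1))"

definition ducciK :: "int \<Rightarrow> triple set" where
  "ducciK m = {u \<in> Zm3 m. \<exists>k\<ge>1. (ducci m ^^ k) u = u}"

end

theory Submission
  imports Defs
begin

text \<open>The entry sum s of a tuple satisfies s(D u) = 2 s(u) mod m. For a periodic u with
  D^k u = u this gives s(u) = 2^(k l) s(u) = 0 mod 2^l. Once the entries sum to 0 mod m,
  the first entry of D^2 (a, b, c) is a + 2 b + c = b mod m, and likewise for the others.\<close>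

definition triple_sum :: "triple \<Rightarrow> int" where
  "triple_sum u = (case u of (a, b, c) \<Rightarrow> a + b + c)"

lemma triple_sum_ducci_mod: "triple_sum (ducci m u) mod m = (2 * triple_sum u) mod m"
proof -
  obtain a b c where u: "u = (a, b, c)"
    by (cases u) auto
  have "triple_sum (ducci m u) mod m = ((a + b) mod m + (b + c) mod m + (c + a) mod m) mod m"
    by (simp add: u ducci_def triple_sum_def)
  also have "\<dots> = ((a + b) + (b + c) + (c + a)) mod m"
    by (metis mod_add_eq mod_add_left_eq)
  finally show ?thesis
    by (simp add: u triple_sum_def algebra_simps)
qed

lemma triple_sum_ducci_funpow_mod:
  "triple_sum ((ducci m ^^ n) u) mod m = (2 ^ n * triple_sum u) mod m"
proof (induction n)
  case 0
  then show ?case by simp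
next
  case (Suc n)
  have "triple_sum ((ducci m ^^ Suc n) u) mod m = (2 * (triple_sum ((ducci m ^^ n) u) mod m)) mod m"
    by (simp add: triple_sum_ducci_mod mod_simps)
  also have "\<dots> = (2 ^ Suc n * triple_sum u) mod m"
    by (simp add: Suc.IH mod_simps mult.assoc)
  finally show ?case .
qed

lemma triple_sum_mod_eq_0_if_periodic:
  fixes m :: int
  assumes "m = 2 ^ l" and "k \<ge> 1" and "(ducci m ^^ k) u = u"
  shows "triple_sum u mod m = 0"
proof -
  have "(ducci m ^^ (k * l)) u = u"
    using funpow_mod_eq[OF assms(3), of "k * l"] by simp
  then have "triple_sum u mod m = (2 ^ (k * l) * triple_sum u) mod m"
    by (metis triple_sum_ducci_funpow_mod)
  moreover have "m dvd 2 ^ (k * l)"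
    using assms(1,2) by (simp add: le_imp_power_dvd)
  ultimately show ?thesis
    by simp
qed

lemma ducci_twice_eq_shiftH:
  fixes m :: int
  assumes "u \<in> Zm3 m" and "triple_sum u mod m = 0"
  shows "(ducci m ^^ 2) u = shiftH u"
proof -
  obtain a b c where u: "u = (a, b, c)"
    by (cases u) auto
  have ranges: "0 \<le> a" "a < m" "0 \<le> b" "b < m" "0 \<le> c" "c < m"
    using assms(1) by (auto simp: u Zm3_def)
  have sum: "(a + b + c) mod m = 0"
    using assms(2) by (simp add: u triple_sum_def)
  have "((x + y) mod m + (y + z) mod m) mod m = y"
    if "(x + y + z) mod m = 0" and "0 \<le> y" "y < m" for x y z
  proof -
    have "((x + y) mod m + (y + z) mod m) mod m = ((x + y + z) mod m + y) mod m"
      by (metis mod_add_eq mod_add_left_eq add.assoc add.commute)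
    then show ?thesis
      using that by simp
  qed
  moreover have "(b + c + a) mod m = 0" "(c + a + b) mod m = 0"
    using sum by (simp_all add: algebra_simps)
  ultimately show ?thesis
    using sum ranges by (simp add: u ducci_def shiftH_def numeral_2_eq_2)
qed

theorem lemma4p2:
  fixes l :: nat and m :: int and u :: triple
  assumes "l > 0" and "m = 2 ^ l" and "u \<in> ducciK m"
  shows "(ducci m ^^ 2) u = shiftH u"
proof -
  obtain k where "k \<ge> 1" "(ducci m ^^ k) u = u" and "u \<in> Zm3 m"
    using assms(3) unfolding ducciK_def by blast
  then show ?thesis
    using ducci_twice_eq_shiftH triple_sum_mod_eq_0_if_periodic assms(2) by blast
qed

end
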